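(* Let $A$ be a unital C*-algebra. There is a bijective correspondence between quasi-states $\rho$ on $A$ and probability integrals on $\underline{A}_{\mathrm{sa}}$ internal to $\mathcal{T}(A)=[\mathcal{C}(A),\mathbf{Set}]$; externally, the latter are families $(I_C)_{C\in\mathcal{C}(A)}$ of positive linear functionals $I_C\colon C_{\mathrm{sa}}\to\mathbb{R}$ with $I_C(1)=1$ that are natural, i.e. $I_D|_{C_{\mathrm{sa}}}=I_C$ whenever $C\subseteq D$. The correspondence sends $\rho$ to $I_C=\rho|_{C_{\mathrm{sa}}}$ and, conversely, $(I_C)$ to the unique complex-linear-on-real-and-imaginary-parts extension of $a\mapsto I_{C^*(a)}(a)$ ($a\in A_{\mathrm{sa}}$, $C^*(a)$ the C*-subalgebra generated by $a$ and $1$). Under this correspondence faithful quasi-states correspond to faithful probability integrals (those with $I_C(f)=0$, $f\ge0$ implying $f=0$ for all $C$).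
   Context: $\mathcal{C}(A)$: poset of commutative unital C*-subalgebras of $A$ under inclusion; $\underline{A}(C)=C$ is the Bohrification, an internal commutative C*-algebra, and $\underline{A}_{\mathrm{sa}}(C)=C_{\mathrm{sa}}$; the internal Dedekind reals in $\mathcal{T}(A)$ form the constant functor $C\mapsto\mathbb{R}$. A quasi-linear functional on $A$ is a map $\rho\colon A\to\mathbb{C}$ that is linear on every commutative C*-subalgebra and satisfies $\rho(a+ib)=\rho(a)+i\rho(b)$ for all $a,b\in A_{\mathrm{sa}}$; it is a quasi-state if moreover $\rho(A^+)\subseteq\mathbb{R}^+$ and $\rho(1)=1$; it is faithful if $\rho(a)=0$ with $a\ge0$ implies $a=0$. A probability integral on a Riesz space $R$ with strong unit $1$ is a linear $I\colon R\to\mathbb{R}$ with $I(f)\ge0$ for $f\ge0$ and $I(1)=1$. *)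

theory Defs
  imports "HOL-Analysis.Analysis"
begin

text \<open>The real scalar multiplication inherited from real_vector is required
  to agree with the complex one on real scalars.\<close>

class cstar_algebra = real_normed_algebra_1 + banach +
  fixes cscale :: "complex \<Rightarrow> 'a \<Rightarrow> 'a"
    and adj :: "'a \<Rightarrow> 'a"
  assumes cscale_add_right: "cscale c (x + y) = cscale c x + cscale c y"
    and cscale_add_left: "cscale (c + d) x = cscale c x + cscale d x"
    and cscale_cscale: "cscale c (cscale d x) = cscale (c * d) x"
    and cscale_one: "cscale 1 x = x"
    and scaleR_cscale: "scaleR r x = cscale (complex_of_real r) x"
    and norm_cscale: "norm (cscale c x) = cmod c * norm x"
    and cscale_mult_left: "cscale c x * y = cscale c (x * y)"
    and cscale_mult_right: "x * cscale c y = cscale c (x * y)"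
    and adj_add: "adj (x + y) = adj x + adj y"
    and adj_cscale: "adj (cscale c x) = cscale (cnj c) (adj x)"
    and adj_mult: "adj (x * y) = adj y * adj x"
    and adj_adj: "adj (adj x) = x"
    and cstar_identity: "norm (adj x * x) = norm x ^ 2"

instantiation complex :: cstar_algebra
begin
definition cscale_complex :: "complex \<Rightarrow> complex \<Rightarrow> complex" where "cscale_complex c x = c * x"
definition adj_complex :: "complex \<Rightarrow> complex" where "adj_complex x = cnj x"
instance
  by standard (auto simp: cscale_complex_def adj_complex_def algebra_simps norm_mult
      complex_mod_cnj power2_eq_square scaleR_conv_of_real)
end

context cstar_algebra
begin

definition self_adjoint :: "'a \<Rightarrow> bool" where
  "self_adjoint a \<longleftrightarrow> adj a = a"

definition spectrum :: "'a \<Rightarrow> complex set" where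
  "spectrum a = {z. \<not> (\<exists>b. b * (a - cscale z 1) = 1 \<and> (a - cscale z 1) * b = 1)}"

definition positive :: "'a \<Rightarrow> bool" where
  "positive a \<longleftrightarrow> self_adjoint a \<and> spectrum a \<subseteq> {z. Im z = 0 \<and> Re z \<ge> 0}"

definition unital_cstar_subalgebra :: "'a set \<Rightarrow> bool" where
  "unital_cstar_subalgebra C \<longleftrightarrow>
     1 \<in> C \<and> closed C \<and>
     (\<forall>x\<in>C. \<forall>y\<in>C. x + y \<in> C \<and> x * y \<in> C) \<and>
     (\<forall>c. \<forall>x\<in>C. cscale c x \<in> C) \<and>
     (\<forall>x\<in>C. adj x \<in> C)"

definition CA :: "'a set set" where
  "CA = {C. unital_cstar_subalgebra C \<and> (\<forall>x\<in>C. \<forall>y\<in>C. x * y = y * x)}"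

definition gen_cstar :: "'a \<Rightarrow> 'a set" where
  "gen_cstar a = \<Inter>{C. unital_cstar_subalgebra C \<and> a \<in> C}"

text \<open>Real and imaginary parts: a = re_part a + i im_part a with both self-adjoint.\<close>
definition re_part :: "'a \<Rightarrow> 'a" where
  "re_part a = cscale (1/2) (a + adj a)"

definition im_part :: "'a \<Rightarrow> 'a" where
  "im_part a = cscale (1 / (2 * \<i>)) (a - adj a)"

definition quasi_linear :: "('a \<Rightarrow> complex) \<Rightarrow> bool" where
  "quasi_linear \<rho> \<longleftrightarrow>
     (\<forall>C\<in>CA. \<forall>x\<in>C. \<forall>y\<in>C. \<forall>c. \<rho> (x + y) = \<rho> x + \<rho> y \<and> \<rho> (cscale c x) = c * \<rho> x) \<and>
     (\<forall>a b. self_adjoint a \<longrightarrow> self_adjoint b \<longrightarrow> \<rho> (a + cscale \<i> b) = \<rho> a + \<i> * \<rho> b)"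

definition quasi_state :: "('a \<Rightarrow> complex) \<Rightarrow> bool" where
  "quasi_state \<rho> \<longleftrightarrow> quasi_linear \<rho> \<and>
     (\<forall>a. positive a \<longrightarrow> Im (\<rho> a) = 0 \<and> Re (\<rho> a) \<ge> 0) \<and> \<rho> 1 = 1"

definition faithful_qs :: "('a \<Rightarrow> complex) \<Rightarrow> bool" where
  "faithful_qs \<rho> \<longleftrightarrow> (\<forall>a. positive a \<longrightarrow> \<rho> a = 0 \<longrightarrow> a = 0)"

text \<open>External description of an internal probability integral on the
  self-adjoint part of the Bohrification: a natural family (I_C) of positive
  real-linear functionals on C_sa with I_C(1) = 1.  Families are represented
  as functions I C f, extensional (= 0) outside C \<in> \<C>(A), f \<in> C_sa.\<close>
definition prob_integral_family :: "('a set \<Rightarrow> 'a \<Rightarrow> real) \<Rightarrow> bool" where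
  "prob_integral_family I \<longleftrightarrow>
     (\<forall>C\<in>CA.
        (\<forall>f\<in>C. \<forall>g\<in>C. self_adjoint f \<longrightarrow> self_adjoint g \<longrightarrow> I C (f + g) = I C f + I C g) \<and>
        (\<forall>f\<in>C. \<forall>r. self_adjoint f \<longrightarrow> I C (scaleR r f) = r * I C f) \<and>
        (\<forall>f\<in>C. positive f \<longrightarrow> I C f \<ge> 0) \<and>
        I C 1 = 1) \<and>
     (\<forall>C\<in>CA. \<forall>D\<in>CA. C \<subseteq> D \<longrightarrow> (\<forall>f\<in>C. self_adjoint f \<longrightarrow> I D f = I C f)) \<and>
     (\<forall>C f. \<not> (C \<in> CA \<and> f \<in> C \<and> self_adjoint f) \<longrightarrow> I C f = 0)"

definition faithful_pi :: "('a set \<Rightarrow> 'a \<Rightarrow> real) \<Rightarrow> bool" where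
  "faithful_pi I \<longleftrightarrow> (\<forall>C\<in>CA. \<forall>f\<in>C. positive f \<longrightarrow> I C f = 0 \<longrightarrow> f = 0)"

definition qs_to_pi :: "('a \<Rightarrow> complex) \<Rightarrow> ('a set \<Rightarrow> 'a \<Rightarrow> real)" where
  "qs_to_pi \<rho> = (\<lambda>C f. if C \<in> CA \<and> f \<in> C \<and> self_adjoint f then Re (\<rho> f) else 0)"

definition pi_to_qs :: "('a set \<Rightarrow> 'a \<Rightarrow> real) \<Rightarrow> ('a \<Rightarrow> complex)" where
  "pi_to_qs I = (\<lambda>a. complex_of_real (I (gen_cstar (re_part a)) (re_part a))
                     + \<i> * complex_of_real (I (gen_cstar (im_part a)) (im_part a)))"

end

end

theory Submission
  imports Defs
begin

(* A quasi-state rho is restricted to the self-adjoint parts C_sa of the commutative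
   subalgebras C; conversely a natural family (I_C) is glued together by evaluating a
   self-adjoint a in C*(a) and extending to all of A via a = Re a + i Im a.
   Naturality makes the glued functional agree with I_C on every C, whence it is
   linear on C; and a quasi-state is recovered from its restrictions because it is
   real on self-adjoint elements.  That last fact is the only analytic input: a
   quasi-state is real on positive elements, and every self-adjoint h becomes
   positive after adding (norm h) * 1, by the elementary spectral facts (Neumann
   series, spectrum bounded by the norm, real spectrum of self-adjoint elements). *)

text \<open>Neumann series: in a Banach algebra, 1 - x is invertible when
  norm x < 1.  This is what bounds the spectrum by the norm.\<close>
lemma neumann_series_invertible:
  fixes x :: "'a::{real_normed_algebra_1,banach}"
  assumes "norm x < 1"
  shows "\<exists>b. b * (1 - x) = 1 \<and> (1 - x) * b = 1"
proof -
  have summable: "summable (\<lambda>n. x ^ n)"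
    by (rule complete_algebra_summable_geometric[OF assms])
  have telescope: "(\<lambda>n. x ^ n - x ^ Suc n) sums (1 - 0)"
    using telescope_sums'[OF LIMSEQ_power_zero[OF assms]] by simp
  have "(1 - x) * suminf (\<lambda>n. x ^ n) = (\<Sum>n. (1 - x) * x ^ n)"
    using suminf_mult[OF summable] by simp
  also have "\<dots> = 1"
    using sums_unique[OF telescope, symmetric] by (simp add: algebra_simps)
  finally have right: "(1 - x) * suminf (\<lambda>n. x ^ n) = 1" .
  have "suminf (\<lambda>n. x ^ n) * (1 - x) = (\<Sum>n. x ^ n * (1 - x))"
    using suminf_mult2[OF summable] by simp
  also have "\<dots> = 1"
    using sums_unique[OF telescope, symmetric] by (simp add: algebra_simps power_commutes)
  finally show ?thesis using right by blast
qed

lemma cscale_zero_right [simp]: "cscale c 0 = 0"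
  using cscale_add_right[of c 0 0] by simp

lemma cscale_zero_left [simp]: "cscale 0 x = 0"
  using cscale_add_left[of 0 0 x] by simp

lemma cscale_minus_right: "cscale c (- x) = - cscale c x"
  using cscale_add_right[of c x "- x"] by (simp add: eq_neg_iff_add_eq_0 add.commute)

lemma cscale_minus_left: "cscale (- c) x = - cscale c x"
  using cscale_add_left[of c "- c" x] by (simp add: eq_neg_iff_add_eq_0 add.commute)

lemma cscale_diff_right: "cscale c (x - y) = cscale c x - cscale c y"
  using cscale_add_right[of c x "- y"] by (simp add: cscale_minus_right)

lemma cscale_diff_left: "cscale (c - d) x = cscale c x - cscale d x"
  using cscale_add_left[of c "- d" x] by (simp add: cscale_minus_left)

lemma cscale_two: "x + x = cscale 2 x"
  using cscale_add_left[of 1 1 x] by (simp add: cscale_one)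

lemma adj_zero [simp]: "adj 0 = 0"
  using adj_add[of 0 0] by simp

lemma adj_minus: "adj (- x) = - adj x"
  using adj_add[of x "- x"] by (simp add: eq_neg_iff_add_eq_0 add.commute)

lemma adj_diff: "adj (x - y) = adj x - adj y"
  using adj_add[of x "- y"] by (simp add: adj_minus)

lemma adj_one [simp]: "adj 1 = 1"
  using adj_mult[of 1 "adj 1"] by (simp add: adj_adj)

lemma self_adjoint_zero: "self_adjoint (0 :: 'a::cstar_algebra)"
  by (simp add: self_adjoint_def)

lemma self_adjoint_one: "self_adjoint (1 :: 'a::cstar_algebra)"
  by (simp add: self_adjoint_def)

lemma self_adjoint_add: "self_adjoint f \<Longrightarrow> self_adjoint g \<Longrightarrow> self_adjoint (f + g)"
  by (simp add: self_adjoint_def adj_add)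

lemma self_adjoint_scaleR: "self_adjoint f \<Longrightarrow> self_adjoint (scaleR r f)"
  by (simp add: self_adjoint_def scaleR_cscale adj_cscale)

lemma self_adjoint_add_real_unit:
  "self_adjoint h \<Longrightarrow> self_adjoint (h + cscale (complex_of_real r) 1)"
  by (simp add: self_adjoint_def adj_add adj_cscale)

lemma self_adjoint_re_part: "self_adjoint (re_part a)"
  unfolding self_adjoint_def re_part_def
  by (simp add: adj_cscale adj_add adj_adj add.commute)

lemma self_adjoint_im_part: "self_adjoint (im_part a)"
proof -
  have "cnj (1 / (2 * \<i>)) = - (1 / (2 * \<i>))"
    by (simp add: complex_eq_iff)
  then show ?thesis
    unfolding self_adjoint_def im_part_def
    by (simp add: adj_cscale adj_diff adj_adj cscale_minus_left cscale_diff_right)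
qed

lemma re_im_decomposition: "a = re_part a + cscale \<i> (im_part a)"
proof -
  have "re_part a + cscale \<i> (im_part a) = cscale (1/2) (a + adj a) + cscale (1/2) (a - adj a)"
    by (simp add: re_part_def im_part_def cscale_cscale)
  also have "\<dots> = cscale (1/2) (a + adj a + (a - adj a))"
    by (rule cscale_add_right[symmetric])
  also have "a + adj a + (a - adj a) = a + a"
    by (simp add: algebra_simps)
  also have "cscale (1/2) (a + a) = a"
    by (simp add: cscale_two cscale_cscale cscale_one)
  finally show ?thesis by simp
qed

lemma re_im_unique:
  assumes "self_adjoint h" "self_adjoint k"
  shows "re_part (h + cscale \<i> k) = h" "im_part (h + cscale \<i> k) = k"
proof -
  have adjoint: "adj (h + cscale \<i> k) = h - cscale \<i> k"
    using assms by (simp add: self_adjoint_def adj_add adj_cscale cscale_minus_left)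
  have "h + cscale \<i> k + (h - cscale \<i> k) = h + h"
    by (simp add: algebra_simps)
  then show "re_part (h + cscale \<i> k) = h"
    unfolding re_part_def adjoint by (simp add: cscale_two cscale_cscale cscale_one)
  have "h + cscale \<i> k - (h - cscale \<i> k) = cscale \<i> k + cscale \<i> k"
    by (simp add: algebra_simps)
  then have "h + cscale \<i> k - (h - cscale \<i> k) = cscale (2 * \<i>) k"
    by (simp add: cscale_two cscale_cscale)
  then show "im_part (h + cscale \<i> k) = k"
    unfolding im_part_def adjoint by (simp add: cscale_cscale cscale_one)
qed

lemma re_im_part_self_adjoint:
  assumes "self_adjoint a"
  shows "re_part a = a" "im_part a = 0"
  using re_im_unique[OF assms self_adjoint_zero] by simp_all

lemma re_part_add: "re_part (x + y) = re_part x + re_part y"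
  unfolding re_part_def by (simp add: adj_add cscale_add_right[symmetric] algebra_simps)

lemma im_part_add: "im_part (x + y) = im_part x + im_part y"
  unfolding im_part_def by (simp add: adj_add cscale_add_right[symmetric] algebra_simps)

lemma cscale_re_im:
  "cscale c (h + cscale \<i> k) =
     (scaleR (Re c) h + scaleR (- Im c) k) + cscale \<i> (scaleR (Re c) k + scaleR (Im c) h)"
proof -
  have c: "c = complex_of_real (Re c) + \<i> * complex_of_real (Im c)"
    by (simp add: complex_eq_iff)
  have "cscale (complex_of_real s + \<i> * complex_of_real t) (h + cscale \<i> k) =
      (scaleR s h + scaleR (- t) k) + cscale \<i> (scaleR s k + scaleR t h)" for s t
    by (simp add: scaleR_cscale cscale_add_left cscale_add_right cscale_cscale cscale_minus_left
        cscale_diff_left algebra_simps)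
  from this[of "Re c" "Im c"] show ?thesis
    unfolding c[symmetric] .
qed

lemma re_im_part_cscale:
  "re_part (cscale c x) = scaleR (Re c) (re_part x) + scaleR (- Im c) (im_part x)"
  "im_part (cscale c x) = scaleR (Re c) (im_part x) + scaleR (Im c) (re_part x)"
proof -
  have sa: "self_adjoint (scaleR (Re c) (re_part x) + scaleR (- Im c) (im_part x))"
    "self_adjoint (scaleR (Re c) (im_part x) + scaleR (Im c) (re_part x))"
    by (intro self_adjoint_add self_adjoint_scaleR self_adjoint_re_part self_adjoint_im_part)+
  have "cscale c x = (scaleR (Re c) (re_part x) + scaleR (- Im c) (im_part x))
       + cscale \<i> (scaleR (Re c) (im_part x) + scaleR (Im c) (re_part x))"
    using cscale_re_im[of c "re_part x" "im_part x"] re_im_decomposition[of x] by simp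
  then show "re_part (cscale c x) = scaleR (Re c) (re_part x) + scaleR (- Im c) (im_part x)"
    "im_part (cscale c x) = scaleR (Re c) (im_part x) + scaleR (Im c) (re_part x)"
    using re_im_unique[OF sa] by simp_all
qed

subsection \<open>Elementary spectral theory\<close>

lemma spectrum_bounded_by_norm:
  assumes "z \<in> spectrum h"
  shows "cmod z \<le> norm h"
proof (rule ccontr)
  assume "\<not> cmod z \<le> norm h"
  then have less: "norm h < cmod z" and z0: "z \<noteq> 0"
    using norm_ge_zero[of h] by auto
  define y where "y = cscale (1/z) h"
  have "norm y < 1"
    using less z0 by (simp add: y_def norm_cscale norm_divide field_simps)
  then obtain b where b: "b * (1 - y) = 1" "(1 - y) * b = 1"
    by (blast dest: neumann_series_invertible)
  have factor: "h - cscale z 1 = cscale (- z) (1 - y)"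
    using z0 by (simp add: y_def cscale_diff_right cscale_cscale cscale_minus_left cscale_one)
  have "cscale (- (1/z)) b * (h - cscale z 1) = 1" "(h - cscale z 1) * cscale (- (1/z)) b = 1"
    unfolding factor using z0
    by (simp_all add: cscale_mult_left cscale_mult_right cscale_cscale b cscale_one)
  then show False
    using assms unfolding spectrum_def by blast
qed

lemma spectrum_shift: "z \<in> spectrum (h + cscale w 1) \<longleftrightarrow> z - w \<in> spectrum h"
proof -
  have shifted: "h + cscale w 1 - cscale z 1 = h - cscale (z - w) 1"
    by (simp add: cscale_diff_left algebra_simps)
  show ?thesis
    unfolding spectrum_def mem_Collect_eq shifted by (rule refl)
qed

text \<open>The C*-identity gives norm (h + i t)^2 \<le> norm h^2 + t^2
  for self-adjoint h and real t.\<close>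
lemma norm_self_adjoint_plus_imaginary:
  fixes h :: "'a::cstar_algebra" and t :: real
  assumes "self_adjoint h"
  shows "(norm (h + cscale (\<i> * t) 1))\<^sup>2 \<le> (norm h)\<^sup>2 + t\<^sup>2"
proof -
  define y where "y = h + cscale (\<i> * t) 1"
  have adj_y: "adj y = h + cscale (- (\<i> * t)) 1"
    using assms by (simp add: y_def self_adjoint_def adj_add adj_cscale)
  have i_square: "\<i> * t * (\<i> * t) = - complex_of_real (t\<^sup>2)"
    by (simp add: complex_eq_iff power2_eq_square)
  have "adj y * y = h * h + (cscale (\<i> * t) h + cscale (- (\<i> * t)) h)
      + cscale (- (\<i> * t) * (\<i> * t)) 1"
    unfolding adj_y
    by (simp add: y_def cscale_add_right cscale_mult_left cscale_mult_right cscale_cscale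
        algebra_simps)
  also have "\<dots> = h * h + cscale (complex_of_real (t\<^sup>2)) 1"
    by (simp add: cscale_minus_left i_square)
  finally have product: "adj y * y = h * h + cscale (complex_of_real (t\<^sup>2)) 1" .
  have "(norm y)\<^sup>2 = norm (h * h + cscale (complex_of_real (t\<^sup>2)) 1)"
    using cstar_identity[of y] unfolding product by simp
  also have "\<dots> \<le> norm (h * h) + norm (cscale (complex_of_real (t\<^sup>2)) (1 :: 'a))"
    by (rule norm_triangle_ineq)
  also have "\<dots> \<le> (norm h)\<^sup>2 + t\<^sup>2"
    using norm_mult_ineq[of h h] by (simp add: norm_cscale power2_eq_square norm_mult)
  finally show ?thesis unfolding y_def .
qed

text \<open>Self-adjoint elements have real spectrum: a non-real spectral value z could be
  pushed outside the norm bound by shifting h by a large imaginary multiple of 1.\<close>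
lemma spectrum_self_adjoint_real:
  assumes sa: "self_adjoint h" and z: "z \<in> spectrum h"
  shows "Im z = 0"
proof (rule ccontr)
  assume nz: "Im z \<noteq> 0"
  have bound: "(Re z)\<^sup>2 + (Im z + t)\<^sup>2 \<le> (norm h)\<^sup>2 + t\<^sup>2" for t :: real
  proof -
    have "z + \<i> * t \<in> spectrum (h + cscale (\<i> * t) 1)"
      using z by (simp add: spectrum_shift)
    then have "cmod (z + \<i> * t) \<le> norm (h + cscale (\<i> * t) 1)"
      by (rule spectrum_bounded_by_norm)
    then have "(cmod (z + \<i> * t))\<^sup>2 \<le> (norm (h + cscale (\<i> * t) 1))\<^sup>2"
      by (simp add: power_mono)
    moreover have "(cmod (z + \<i> * t))\<^sup>2 = (Re z)\<^sup>2 + (Im z + t)\<^sup>2"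
      by (simp add: cmod_power2)
    ultimately show ?thesis
      using norm_self_adjoint_plus_imaginary[OF sa, of t] by linarith
  qed
  define t where "t = (norm h)\<^sup>2 / (2 * Im z)"
  have "2 * Im z * t = (norm h)\<^sup>2" and "(Im z)\<^sup>2 > 0"
    using nz by (simp_all add: t_def)
  moreover have "(Im z + t)\<^sup>2 = (Im z)\<^sup>2 + 2 * Im z * t + t\<^sup>2"
    by (simp add: power2_eq_square algebra_simps)
  ultimately show False
    using bound[of t] zero_le_power2[of "Re z"] by linarith
qed

lemma positive_shift_by_norm:
  assumes sa: "self_adjoint h"
  shows "positive (h + cscale (complex_of_real (norm h)) 1)"
  unfolding positive_def
proof (intro conjI subsetI)
  show "self_adjoint (h + cscale (complex_of_real (norm h)) 1)"
    using sa by (rule self_adjoint_add_real_unit)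
  fix z assume "z \<in> spectrum (h + cscale (complex_of_real (norm h)) 1)"
  then have w: "z - complex_of_real (norm h) \<in> spectrum h"
    by (simp add: spectrum_shift)
  have "Im z = 0"
    using spectrum_self_adjoint_real[OF sa w] by simp
  moreover have "\<bar>Re z - norm h\<bar> \<le> norm h"
    using spectrum_bounded_by_norm[OF w] abs_Re_le_cmod[of "z - complex_of_real (norm h)"]
    by simp
  ultimately show "z \<in> {z. Im z = 0 \<and> 0 \<le> Re z}" by auto
qed

subsection \<open>Unital C*-subalgebras and the poset of commutative ones\<close>

lemma CA_subalgebra: "C \<in> CA \<Longrightarrow> unital_cstar_subalgebra C"
  unfolding CA_def by blast

lemma subalgebra_one: "unital_cstar_subalgebra C \<Longrightarrow> 1 \<in> C"
  unfolding unital_cstar_subalgebra_def by blast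

lemma subalgebra_add: "unital_cstar_subalgebra C \<Longrightarrow> x \<in> C \<Longrightarrow> y \<in> C \<Longrightarrow> x + y \<in> C"
  unfolding unital_cstar_subalgebra_def by blast

lemma subalgebra_cscale: "unital_cstar_subalgebra C \<Longrightarrow> x \<in> C \<Longrightarrow> cscale c x \<in> C"
  unfolding unital_cstar_subalgebra_def by blast

lemma subalgebra_adj: "unital_cstar_subalgebra C \<Longrightarrow> x \<in> C \<Longrightarrow> adj x \<in> C"
  unfolding unital_cstar_subalgebra_def by blast

lemma subalgebra_scaleR: "unital_cstar_subalgebra C \<Longrightarrow> x \<in> C \<Longrightarrow> scaleR r x \<in> C"
  by (simp add: scaleR_cscale subalgebra_cscale)

lemma subalgebra_diff: "unital_cstar_subalgebra C \<Longrightarrow> x \<in> C \<Longrightarrow> y \<in> C \<Longrightarrow> x - y \<in> C"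
  using subalgebra_add[of C x "cscale (-1) y"] subalgebra_cscale[of C y "-1"]
  by (simp add: cscale_minus_left cscale_one)

lemma subalgebra_re_part: "unital_cstar_subalgebra C \<Longrightarrow> x \<in> C \<Longrightarrow> re_part x \<in> C"
  unfolding re_part_def by (intro subalgebra_cscale subalgebra_add subalgebra_adj)

lemma subalgebra_im_part: "unital_cstar_subalgebra C \<Longrightarrow> x \<in> C \<Longrightarrow> im_part x \<in> C"
  unfolding im_part_def by (intro subalgebra_cscale subalgebra_diff subalgebra_adj)

lemma commutant_subalgebra:
  "unital_cstar_subalgebra {x. x * y = y * x \<and> x * adj y = adj y * x}"
  unfolding unital_cstar_subalgebra_def
proof (intro conjI ballI allI)
  have "closed {x. x * y = y * x}" "closed {x. x * adj y = adj y * x}"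
    by (rule closed_Collect_eq; intro continuous_intros)+
  then show "closed {x. x * y = y * x \<and> x * adj y = adj y * x}"
    by (simp add: Collect_conj_eq closed_Int)
next
  fix x z assume "x \<in> {x. x * y = y * x \<and> x * adj y = adj y * x}"
    "z \<in> {x. x * y = y * x \<and> x * adj y = adj y * x}"
  then show "x + z \<in> {x. x * y = y * x \<and> x * adj y = adj y * x}"
    "x * z \<in> {x. x * y = y * x \<and> x * adj y = adj y * x}"
    by (simp_all add: distrib_left distrib_right) (metis mult.assoc)
next
  fix x assume x: "x \<in> {x. x * y = y * x \<and> x * adj y = adj y * x}"
  have "adj x * y = adj (adj y * x)" "adj x * adj y = adj (y * x)"
    by (simp_all add: adj_mult adj_adj)
  moreover have "y * adj x = adj (x * adj y)" "adj y * adj x = adj (x * y)"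
    by (simp_all add: adj_mult adj_adj)
  ultimately show "adj x \<in> {x. x * y = y * x \<and> x * adj y = adj y * x}"
    using x by simp
qed (auto simp: cscale_mult_left cscale_mult_right)

lemma gen_cstar_subalgebra: "unital_cstar_subalgebra (gen_cstar a)"
  unfolding gen_cstar_def unital_cstar_subalgebra_def by auto

lemma gen_cstar_mem: "a \<in> gen_cstar a"
  unfolding gen_cstar_def by auto

lemma gen_cstar_least: "unital_cstar_subalgebra C \<Longrightarrow> a \<in> C \<Longrightarrow> gen_cstar a \<subseteq> C"
  unfolding gen_cstar_def by auto

text \<open>C*(a) is commutative for self-adjoint a, so it is an object of the poset:
  first C*(a) commutes with a, hence every element y of C*(a) has a in its
  *-commutant, which therefore contains all of C*(a).\<close>
lemma gen_cstar_CA: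
  assumes "self_adjoint a"
  shows "gen_cstar a \<in> CA"
proof -
  have commutes_a: "gen_cstar a \<subseteq> {x. x * a = a * x \<and> x * adj a = adj a * x}"
    using assms by (intro gen_cstar_least commutant_subalgebra) (simp add: self_adjoint_def)
  have "x * y = y * x" if x: "x \<in> gen_cstar a" and y: "y \<in> gen_cstar a" for x y
  proof -
    have "adj y \<in> gen_cstar a"
      using y by (rule subalgebra_adj[OF gen_cstar_subalgebra])
    then have "a \<in> {x. x * y = y * x \<and> x * adj y = adj y * x}"
      using commutes_a y by auto
    then have "gen_cstar a \<subseteq> {x. x * y = y * x \<and> x * adj y = adj y * x}"
      by (intro gen_cstar_least commutant_subalgebra)
    then show ?thesis using x by auto
  qed
  then show ?thesis
    unfolding CA_def using gen_cstar_subalgebra by blast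
qed

lemma quasi_state_add: "quasi_state \<rho> \<Longrightarrow> C \<in> CA \<Longrightarrow> x \<in> C \<Longrightarrow> y \<in> C \<Longrightarrow> \<rho> (x + y) = \<rho> x + \<rho> y"
  unfolding quasi_state_def quasi_linear_def by blast

lemma quasi_state_cscale: "quasi_state \<rho> \<Longrightarrow> C \<in> CA \<Longrightarrow> x \<in> C \<Longrightarrow> \<rho> (cscale c x) = c * \<rho> x"
  unfolding quasi_state_def quasi_linear_def by blast

lemma quasi_state_re_im:
  "quasi_state \<rho> \<Longrightarrow> self_adjoint a \<Longrightarrow> self_adjoint b \<Longrightarrow> \<rho> (a + cscale \<i> b) = \<rho> a + \<i> * \<rho> b"
  unfolding quasi_state_def quasi_linear_def by blast

lemma quasi_state_positive: "quasi_state \<rho> \<Longrightarrow> positive a \<Longrightarrow> Im (\<rho> a) = 0 \<and> Re (\<rho> a) \<ge> 0"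
  unfolding quasi_state_def by blast

lemma quasi_state_one: "quasi_state \<rho> \<Longrightarrow> \<rho> 1 = 1"
  unfolding quasi_state_def by blast

text \<open>A quasi-state is real on self-adjoint elements: within the commutative
  algebra C*(h), \<rho> h = \<rho> (h + norm h) - norm h, and the argument of
  \<rho> on the right is positive.\<close>
lemma quasi_state_real:
  fixes h :: "'a::cstar_algebra"
  assumes qs: "quasi_state \<rho>" and sa: "self_adjoint h"
  shows "\<rho> h = complex_of_real (Re (\<rho> h))"
proof -
  define n where "n = cscale (complex_of_real (norm h)) (1 :: 'a)"
  have C: "gen_cstar h \<in> CA" and h: "h \<in> gen_cstar h"
    by (rule gen_cstar_CA[OF sa], rule gen_cstar_mem)
  have one: "1 \<in> gen_cstar h"
    by (rule subalgebra_one[OF gen_cstar_subalgebra])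
  then have "n \<in> gen_cstar h"
    unfolding n_def by (rule subalgebra_cscale[OF gen_cstar_subalgebra])
  then have "\<rho> (h + n) = \<rho> h + complex_of_real (norm h)"
    using quasi_state_add[OF qs C h] quasi_state_cscale[OF qs C one] quasi_state_one[OF qs]
    by (simp add: n_def)
  moreover have "Im (\<rho> (h + n)) = 0"
    using quasi_state_positive[OF qs positive_shift_by_norm[OF sa]] by (simp add: n_def)
  ultimately show ?thesis
    by (simp add: complex_eq_iff)
qed

lemma prob_integral_familyD:
  assumes "prob_integral_family I"
  shows integral_add: "\<And>C f g. C \<in> CA \<Longrightarrow> f \<in> C \<Longrightarrow> g \<in> C \<Longrightarrow> self_adjoint f \<Longrightarrow> self_adjoint g
      \<Longrightarrow> I C (f + g) = I C f + I C g"
    and integral_scaleR: "\<And>C f r. C \<in> CA \<Longrightarrow> f \<in> C \<Longrightarrow> self_adjoint f \<Longrightarrow> I C (scaleR r f) = r * I C f"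
    and integral_positive: "\<And>C f. C \<in> CA \<Longrightarrow> f \<in> C \<Longrightarrow> positive f \<Longrightarrow> I C f \<ge> 0"
    and integral_one: "\<And>C. C \<in> CA \<Longrightarrow> I C 1 = 1"
    and integral_natural: "\<And>C D f. C \<in> CA \<Longrightarrow> D \<in> CA \<Longrightarrow> C \<subseteq> D \<Longrightarrow> f \<in> C \<Longrightarrow> self_adjoint f
      \<Longrightarrow> I D f = I C f"
    and integral_outside: "\<And>C f. \<not> (C \<in> CA \<and> f \<in> C \<and> self_adjoint f) \<Longrightarrow> I C f = 0"
proof -
  note family = assms[unfolded prob_integral_family_def]
  note local = family[THEN conjunct1] and natural = family[THEN conjunct2, THEN conjunct1]
    and outside = family[THEN conjunct2, THEN conjunct2]
  show "\<And>C f g. C \<in> CA \<Longrightarrow> f \<in> C \<Longrightarrow> g \<in> C \<Longrightarrow> self_adjoint f \<Longrightarrow> self_adjoint g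
      \<Longrightarrow> I C (f + g) = I C f + I C g"
    and "\<And>C f r. C \<in> CA \<Longrightarrow> f \<in> C \<Longrightarrow> self_adjoint f \<Longrightarrow> I C (scaleR r f) = r * I C f"
    and "\<And>C f. C \<in> CA \<Longrightarrow> f \<in> C \<Longrightarrow> positive f \<Longrightarrow> I C f \<ge> 0"
    and "\<And>C. C \<in> CA \<Longrightarrow> I C 1 = 1"
    using local by blast+
  show "\<And>C D f. C \<in> CA \<Longrightarrow> D \<in> CA \<Longrightarrow> C \<subseteq> D \<Longrightarrow> f \<in> C \<Longrightarrow> self_adjoint f
      \<Longrightarrow> I D f = I C f"
    using natural by blast
  show "\<And>C f. \<not> (C \<in> CA \<and> f \<in> C \<and> self_adjoint f) \<Longrightarrow> I C f = 0"
    using outside by blast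
qed

lemma integral_zero:
  assumes pi: "prob_integral_family I"
  shows "I C 0 = 0"
proof (cases "C \<in> CA")
  case True
  have "0 \<in> C"
    using subalgebra_scaleR[OF CA_subalgebra[OF True] subalgebra_one[OF CA_subalgebra[OF True]],
        of 0] by simp
  then have "I C (scaleR 0 0) = 0 * I C 0"
    by (rule integral_scaleR[OF pi True _ self_adjoint_zero])
  then show ?thesis by simp
next
  case False
  then show ?thesis by (intro integral_outside[OF pi]) simp
qed

lemma integral_local:
  assumes pi: "prob_integral_family I" and C: "C \<in> CA" "f \<in> C" "self_adjoint f"
  shows "I (gen_cstar f) f = I C f"
proof -
  have "gen_cstar f \<subseteq> C"
    by (rule gen_cstar_least[OF CA_subalgebra[OF C(1)] C(2)])
  from integral_natural[OF pi gen_cstar_CA[OF C(3)] C(1) this gen_cstar_mem C(3)]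
  show ?thesis by (rule sym)
qed

subsection \<open>The correspondence\<close>

lemma pi_to_qs_in_context:
  assumes pi: "prob_integral_family I" and C: "C \<in> CA" "x \<in> C"
  shows "pi_to_qs I x = complex_of_real (I C (re_part x)) + \<i> * complex_of_real (I C (im_part x))"
  unfolding pi_to_qs_def
  using integral_local[OF pi C(1) subalgebra_re_part[OF CA_subalgebra C(2)] self_adjoint_re_part]
    integral_local[OF pi C(1) subalgebra_im_part[OF CA_subalgebra C(2)] self_adjoint_im_part] C(1)
  by simp

lemma pi_to_qs_self_adjoint:
  assumes pi: "prob_integral_family I" and "self_adjoint a"
  shows "pi_to_qs I a = complex_of_real (I (gen_cstar a) a)"
  unfolding pi_to_qs_def using re_im_part_self_adjoint[OF assms(2)] integral_zero[OF pi] by simp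

lemma pi_to_qs_linear_in_context:
  assumes pi: "prob_integral_family I" and C: "C \<in> CA" "x \<in> C" "y \<in> C"
  shows "pi_to_qs I (x + y) = pi_to_qs I x + pi_to_qs I y"
    and "pi_to_qs I (cscale c x) = c * pi_to_qs I x"
proof -
  have U: "unital_cstar_subalgebra C"
    using CA_subalgebra[OF C(1)] .
  note parts = subalgebra_re_part[OF U] subalgebra_im_part[OF U]
    and sa = self_adjoint_re_part self_adjoint_im_part
  have combination: "I C (scaleR r f + scaleR s g) = r * I C f + s * I C g"
    if "f \<in> C" "g \<in> C" "self_adjoint f" "self_adjoint g" for f g r s
    using that by (simp add: integral_add[OF pi C(1)] integral_scaleR[OF pi C(1)]
        subalgebra_scaleR[OF U] self_adjoint_scaleR)
  show "pi_to_qs I (x + y) = pi_to_qs I x + pi_to_qs I y"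
    unfolding pi_to_qs_in_context[OF pi C(1) subalgebra_add[OF U C(2,3)]]
      pi_to_qs_in_context[OF pi C(1) C(2)] pi_to_qs_in_context[OF pi C(1) C(3)]
      re_part_add im_part_add
    using integral_add[OF pi C(1) parts(1)[OF C(2)] parts(1)[OF C(3)] sa(1) sa(1)]
      integral_add[OF pi C(1) parts(2)[OF C(2)] parts(2)[OF C(3)] sa(2) sa(2)]
    by (simp add: algebra_simps)
  show "pi_to_qs I (cscale c x) = c * pi_to_qs I x"
    unfolding pi_to_qs_in_context[OF pi C(1) subalgebra_cscale[OF U C(2)]]
      pi_to_qs_in_context[OF pi C(1) C(2)] re_im_part_cscale
    using combination[OF parts(1)[OF C(2)] parts(2)[OF C(2)] sa, of "Re c" "- Im c"]
      combination[OF parts(2)[OF C(2)] parts(1)[OF C(2)] sa(2,1), of "Re c" "Im c"]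
    by (simp add: complex_eq_iff)
qed

lemma pi_to_qs_quasi_state:
  fixes I :: "'a::cstar_algebra set \<Rightarrow> 'a \<Rightarrow> real"
  assumes pi: "prob_integral_family I"
  shows "quasi_state (pi_to_qs I)"
  unfolding quasi_state_def quasi_linear_def
proof (intro conjI ballI allI impI)
  fix C and x y :: 'a and c assume "C \<in> CA" "x \<in> C" "y \<in> C"
  then show "pi_to_qs I (x + y) = pi_to_qs I x + pi_to_qs I y"
    "pi_to_qs I (cscale c x) = c * pi_to_qs I x"
    by (rule pi_to_qs_linear_in_context[OF pi])+
next
  fix a b :: 'a assume sa: "self_adjoint a" "self_adjoint b"
  then show "pi_to_qs I (a + cscale \<i> b) = pi_to_qs I a + \<i> * pi_to_qs I b"
    using re_im_unique[OF sa] pi_to_qs_self_adjoint[OF pi sa(1)] pi_to_qs_self_adjoint[OF pi sa(2)]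
    unfolding pi_to_qs_def by simp
next
  fix a :: 'a assume pos: "positive a"
  then have "self_adjoint a"
    by (simp add: positive_def)
  then show "Im (pi_to_qs I a) = 0" "Re (pi_to_qs I a) \<ge> 0"
    using integral_positive[OF pi gen_cstar_CA gen_cstar_mem pos] pi_to_qs_self_adjoint[OF pi]
    by simp_all
next
  show "pi_to_qs I 1 = 1"
    using integral_one[OF pi gen_cstar_CA[OF self_adjoint_one]]
      pi_to_qs_self_adjoint[OF pi self_adjoint_one] by simp
qed

lemma qs_to_pi_prob_integral_family:
  fixes \<rho> :: "'a::cstar_algebra \<Rightarrow> complex"
  assumes qs: "quasi_state \<rho>"
  shows "prob_integral_family (qs_to_pi \<rho>)"
  unfolding prob_integral_family_def
proof (intro conjI ballI allI impI)
  fix C :: "'a set" assume C: "C \<in> CA"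
  note U = CA_subalgebra[OF C]
  fix f g assume fg: "f \<in> C" "g \<in> C" and sa: "self_adjoint f" "self_adjoint g"
  then show "qs_to_pi \<rho> C (f + g) = qs_to_pi \<rho> C f + qs_to_pi \<rho> C g"
    unfolding qs_to_pi_def
    using C subalgebra_add[OF U fg] self_adjoint_add[OF sa] quasi_state_add[OF qs C fg] by simp
next
  fix C and f :: 'a and r assume C: "C \<in> CA" and f: "f \<in> C" and sa: "self_adjoint f"
  then show "qs_to_pi \<rho> C (scaleR r f) = r * qs_to_pi \<rho> C f"
    unfolding qs_to_pi_def
    using subalgebra_scaleR[OF CA_subalgebra[OF C] f, of r] self_adjoint_scaleR[OF sa, of r]
      quasi_state_cscale[OF qs C f, of "complex_of_real r"]
    by (simp add: scaleR_cscale)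
next
  fix C and f :: 'a assume "C \<in> CA" "f \<in> C" "positive f"
  then show "qs_to_pi \<rho> C f \<ge> 0"
    unfolding qs_to_pi_def using quasi_state_positive[OF qs] by (simp add: positive_def)
next
  fix C :: "'a set" assume C: "C \<in> CA"
  then show "qs_to_pi \<rho> C 1 = 1"
    unfolding qs_to_pi_def
    using subalgebra_one[OF CA_subalgebra[OF C]] self_adjoint_one quasi_state_one[OF qs] by simp
qed (auto simp: qs_to_pi_def)

lemma pi_to_qs_to_pi:
  fixes I :: "'a::cstar_algebra set \<Rightarrow> 'a \<Rightarrow> real"
  assumes pi: "prob_integral_family I"
  shows "qs_to_pi (pi_to_qs I) = I"
proof (intro ext)
  fix C f
  show "qs_to_pi (pi_to_qs I) C f = I C f"
    unfolding qs_to_pi_def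
    using pi_to_qs_self_adjoint[OF pi] integral_local[OF pi] integral_outside[OF pi, of C f]
    by auto
qed

lemma qs_to_pi_to_qs:
  fixes \<rho> :: "'a::cstar_algebra \<Rightarrow> complex"
  assumes qs: "quasi_state \<rho>"
  shows "pi_to_qs (qs_to_pi \<rho>) = \<rho>"
proof
  fix a
  have restriction: "complex_of_real (qs_to_pi \<rho> (gen_cstar h) h) = \<rho> h" if "self_adjoint h" for h
    unfolding qs_to_pi_def
    using gen_cstar_CA[OF that] gen_cstar_mem[of h] quasi_state_real[OF qs that] that by simp
  have "pi_to_qs (qs_to_pi \<rho>) a = \<rho> (re_part a) + \<i> * \<rho> (im_part a)"
    unfolding pi_to_qs_def restriction[OF self_adjoint_re_part] restriction[OF self_adjoint_im_part] ..
  also have "\<dots> = \<rho> (re_part a + cscale \<i> (im_part a))"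
    by (rule quasi_state_re_im[OF qs self_adjoint_re_part self_adjoint_im_part, symmetric])
  also have "\<dots> = \<rho> a"
    by (simp only: re_im_decomposition[symmetric])
  finally show "pi_to_qs (qs_to_pi \<rho>) a = \<rho> a" .
qed

text \<open>Faithfulness transfers both ways: on a positive f the value of \<rho> is real,
  so it vanishes exactly when its real part, the value of the family, does.\<close>
lemma faithful_correspondence:
  fixes \<rho> :: "'a::cstar_algebra \<Rightarrow> complex"
  assumes qs: "quasi_state \<rho>"
  shows "faithful_qs \<rho> \<longleftrightarrow> faithful_pi (qs_to_pi \<rho>)"
proof -
  have vanish: "qs_to_pi \<rho> C f = 0 \<longleftrightarrow> \<rho> f = 0" if "C \<in> CA" "f \<in> C" "positive f" for C f
    using that quasi_state_positive[OF qs that(3)]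
    by (simp add: qs_to_pi_def positive_def complex_eq_iff)
  show ?thesis
  proof
    assume "faithful_qs \<rho>"
    then show "faithful_pi (qs_to_pi \<rho>)"
      unfolding faithful_qs_def faithful_pi_def using vanish by blast
  next
    assume faithful: "faithful_pi (qs_to_pi \<rho>)"
    show "faithful_qs \<rho>"
      unfolding faithful_qs_def
    proof (intro allI impI)
      fix a :: 'a assume pos: "positive a" and zero: "\<rho> a = 0"
      have "gen_cstar a \<in> CA"
        using pos by (simp add: positive_def gen_cstar_CA)
      then show "a = 0"
        using faithful vanish pos zero gen_cstar_mem unfolding faithful_pi_def by blast
    qed
  qed
qed

theorem theorem6:
  fixes dummy :: "'a :: cstar_algebra"
  shows "bij_betw (qs_to_pi :: ('a \<Rightarrow> complex) \<Rightarrow> _)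
            {\<rho>. quasi_state \<rho>} {I. prob_integral_family I}
       \<and> (\<forall>I. prob_integral_family (I :: 'a set \<Rightarrow> 'a \<Rightarrow> real) \<longrightarrow>
              quasi_state (pi_to_qs I) \<and> qs_to_pi (pi_to_qs I) = I)
       \<and> (\<forall>\<rho> :: 'a \<Rightarrow> complex. quasi_state \<rho> \<longrightarrow> pi_to_qs (qs_to_pi \<rho>) = \<rho>)
       \<and> (\<forall>\<rho> :: 'a \<Rightarrow> complex. quasi_state \<rho> \<longrightarrow>
              (faithful_qs \<rho> \<longleftrightarrow> faithful_pi (qs_to_pi \<rho>)))"
proof (intro conjI allI impI)
  show "bij_betw qs_to_pi {\<rho> :: 'a \<Rightarrow> complex. quasi_state \<rho>} {I. prob_integral_family I}"
  proof (rule bij_betw_byWitness[where f' = pi_to_qs])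
    show "\<forall>\<rho>\<in>{\<rho>. quasi_state \<rho>}. pi_to_qs (qs_to_pi \<rho>) = (\<rho> :: 'a \<Rightarrow> complex)"
      using qs_to_pi_to_qs by blast
    show "\<forall>I\<in>{I. prob_integral_family I}. qs_to_pi (pi_to_qs I) = (I :: 'a set \<Rightarrow> 'a \<Rightarrow> real)"
      using pi_to_qs_to_pi by blast
    show "qs_to_pi ` {\<rho> :: 'a \<Rightarrow> complex. quasi_state \<rho>} \<subseteq> {I. prob_integral_family I}"
      using qs_to_pi_prob_integral_family by blast
    show "pi_to_qs ` {I :: 'a set \<Rightarrow> 'a \<Rightarrow> real. prob_integral_family I} \<subseteq> {\<rho>. quasi_state \<rho>}"
      using pi_to_qs_quasi_state by blast
  qed
qed (simp_all add: qs_to_pi_to_qs pi_to_qs_to_pi pi_to_qs_quasi_state faithful_correspondence)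

end
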